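(* Let $G=(V,E)$ be an $n$-node $d$-dimensional $\alpha$-quasi unit ball graph. Let $G_0=(V,E_0)$ be its spanning subgraph with $E_0=\{\{u,v\}\in E: |uv|\le \alpha/n\}$. Then the vertex set of every connected component of $G_0$ induces a clique in $G$.
   Context: A $d$-dimensional $\alpha$-quasi unit ball graph, for $0<\alpha\le1$, is a graph whose vertices correspond one-to-one to points of $\mathbb{R}^d$. Writing $|uv|$ for the Euclidean distance between the points of $u$ and $v$, it satisfies: $|uv|\le\alpha$ implies $\{u,v\}$ is an edge, and $|uv|>1$ implies $\{u,v\}$ is not an edge. *)

theory Defs
  imports "HOL-Analysis.Analysis"
begin

text \<open>A graph with vertex set V and edge set E (edges are 2-element sets of vertices),
  whose vertices are placed injectively at points p of R^d (d = CARD('d)).\<close>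

definition quasi_unit_ball_graph ::
  "real \<Rightarrow> 'v set \<Rightarrow> 'v set set \<Rightarrow> ('v \<Rightarrow> real^'d) \<Rightarrow> bool" where
  "quasi_unit_ball_graph \<alpha> V E p \<longleftrightarrow>
     0 < \<alpha> \<and> \<alpha> \<le> 1 \<and>
     inj_on p V \<and>
     E \<subseteq> {{u, v} | u v. u \<in> V \<and> v \<in> V \<and> u \<noteq> v} \<and>
     (\<forall>u\<in>V. \<forall>v\<in>V. u \<noteq> v \<longrightarrow> dist (p u) (p v) \<le> \<alpha> \<longrightarrow> {u, v} \<in> E) \<and>
     (\<forall>u\<in>V. \<forall>v\<in>V. u \<noteq> v \<longrightarrow> dist (p u) (p v) > 1 \<longrightarrow> {u, v} \<notin> E)"

definition adj :: "'v set \<Rightarrow> 'v set set \<Rightarrow> 'v \<Rightarrow> 'v \<Rightarrow> bool" where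
  "adj V E u v \<longleftrightarrow> u \<in> V \<and> v \<in> V \<and> {u, v} \<in> E"

definition component :: "'v set \<Rightarrow> 'v set set \<Rightarrow> 'v \<Rightarrow> 'v set" where
  "component V E u = {v \<in> V. (adj V E)\<^sup>*\<^sup>* u v}"

definition is_clique :: "'v set set \<Rightarrow> 'v set \<Rightarrow> bool" where
  "is_clique E C \<longleftrightarrow> (\<forall>x\<in>C. \<forall>y\<in>C. x \<noteq> y \<longrightarrow> {x, y} \<in> E)"

end

theory Submission
  imports Defs
begin

text \<open>The vertices reachable from x are exhausted ball by ball around x:
  if the ball of radius k d around x does not yet contain everything reachable, some edge
  leaves it, and its endpoint lies in the ball of radius (k + 1) d. Hence the ball of radius
  (m - 1) d already contains all m reachable vertices. For a component of G0 on at most n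
  vertices with edges of length at most \<alpha>/n this gives diameter at most (n - 1) \<alpha>/n < \<alpha>,
  so any two of its vertices are adjacent in G.\<close>

lemma rtranclp_exit_step:
  assumes "R\<^sup>*\<^sup>* x y" "x \<in> A" "y \<notin> A"
  shows "\<exists>a b. a \<in> A \<and> b \<notin> A \<and> R a b \<and> R\<^sup>*\<^sup>* x b"
  using assms
proof (induction rule: rtranclp_induct)
  case base
  then show ?case by simp
next
  case (step z w)
  show ?case
  proof (cases "z \<in> A")
    case True
    with step show ?thesis by (meson rtranclp.rtrancl_into_rtrancl)
  next
    case False
    with step show ?thesis by blast
  qed
qed

lemma card_reachable_ball_ge:
  fixes f :: "'a \<Rightarrow> 'b::metric_space"
  assumes fin: "finite {y. R\<^sup>*\<^sup>* x y}"
    and step_dist: "\<And>a b. R a b \<Longrightarrow> dist (f a) (f b) \<le> d" and "0 \<le> d"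
  shows "min (Suc k) (card {y. R\<^sup>*\<^sup>* x y})
           \<le> card {y. R\<^sup>*\<^sup>* x y \<and> dist (f x) (f y) \<le> real k * d}"
proof (induction k)
  case 0
  have "{x} \<subseteq> {y. R\<^sup>*\<^sup>* x y \<and> dist (f x) (f y) \<le> real 0 * d}" by simp
  from card_mono[OF _ this] fin show ?case by (simp add: min_le_iff_disj)
next
  case (Suc k)
  define S where "S = {y. R\<^sup>*\<^sup>* x y}"
  define ball where "ball r = {y \<in> S. dist (f x) (f y) \<le> real r * d}" for r
  have "real k * d \<le> real (Suc k) * d" using \<open>0 \<le> d\<close> by (intro mult_right_mono) auto
  then have ball_mono: "ball k \<subseteq> ball (Suc k)" "ball (Suc k) \<subseteq> S"
    by (auto simp: ball_def)
  have "min (Suc (Suc k)) (card S) \<le> card (ball (Suc k))"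
  proof (cases "ball k = S")
    case True
    with ball_mono have "ball (Suc k) = S" by blast
    then show ?thesis by simp
  next
    case False
    then obtain y where "y \<in> S" "y \<notin> ball k" unfolding ball_def by auto
    moreover have "x \<in> ball k" using \<open>0 \<le> d\<close> by (simp add: ball_def S_def)
    ultimately obtain a b where ab: "a \<in> ball k" "b \<notin> ball k" "R a b" "R\<^sup>*\<^sup>* x b"
      using rtranclp_exit_step[of R x y "ball k"] by (auto simp: S_def)
    have "dist (f x) (f b) \<le> dist (f x) (f a) + dist (f a) (f b)" by (rule dist_triangle)
    also have "\<dots> \<le> real k * d + d" using ab(1) step_dist[OF ab(3)] by (simp add: ball_def)
    finally have "b \<in> ball (Suc k)" using ab(4) by (simp add: ball_def S_def algebra_simps)
    with ball_mono ab(2) have "ball k \<subset> ball (Suc k)" by blast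
    then have "card (ball k) < card (ball (Suc k))"
      using ball_mono fin by (metis S_def finite_subset psubset_card_mono)
    with Suc.IH show ?thesis by (simp add: S_def ball_def)
  qed
  then show ?case by (simp add: S_def ball_def)
qed

lemma reachable_dist_le_card:
  fixes f :: "'a \<Rightarrow> 'b::metric_space"
  assumes fin: "finite {y. R\<^sup>*\<^sup>* x y}"
    and step_dist: "\<And>a b. R a b \<Longrightarrow> dist (f a) (f b) \<le> d" and "0 \<le> d"
    and "R\<^sup>*\<^sup>* x y"
  shows "dist (f x) (f y) \<le> real (card {y. R\<^sup>*\<^sup>* x y} - 1) * d"
proof -
  define S where "S = {y. R\<^sup>*\<^sup>* x y}"
  define m where "m = card S - 1"
  define B where "B = {y \<in> S. dist (f x) (f y) \<le> real m * d}"
  have "card S \<noteq> 0" using fin by (auto simp: S_def)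
  then have "card S \<le> card B"
    using card_reachable_ball_ge[OF assms(1-3), where k = m] by (simp add: S_def B_def m_def)
  with fin have "B = S" by (intro card_seteq) (auto simp: S_def B_def)
  with \<open>R\<^sup>*\<^sup>* x y\<close> show ?thesis by (auto simp: S_def B_def m_def)
qed

lemma symp_adj: "symp (adj V E)"
  by (auto intro: sympI simp: adj_def insert_commute)

lemma component_eq_reachable:
  assumes "x \<in> component V E u"
  shows "component V E u = {y. (adj V E)\<^sup>*\<^sup>* x y}"
proof -
  have ux: "(adj V E)\<^sup>*\<^sup>* u x" and "x \<in> V" using assms by (auto simp: component_def)
  have "(adj V E)\<^sup>*\<^sup>* x u" using ux symp_adj by (metis sympD symp_rtranclp)
  with ux have reach: "(adj V E)\<^sup>*\<^sup>* u y \<longleftrightarrow> (adj V E)\<^sup>*\<^sup>* x y" for y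
    by (meson rtranclp_trans)
  have "y \<in> V" if "(adj V E)\<^sup>*\<^sup>* x y" for y
    using that by (induction rule: rtranclp_induct) (use \<open>x \<in> V\<close> in \<open>auto simp: adj_def\<close>)
  then show ?thesis by (auto simp: component_def reach)
qed

theorem lemma2p1:
  fixes V :: "'v set" and E :: "'v set set" and p :: "'v \<Rightarrow> real^'d"
    and \<alpha> :: real and n :: nat
  assumes "finite V" and "card V = n"
    and "quasi_unit_ball_graph \<alpha> V E p"
  defines "E0 \<equiv> {e \<in> E. \<forall>u v. e = {u, v} \<longrightarrow> dist (p u) (p v) \<le> \<alpha> / real n}"
  shows "\<forall>u\<in>V. is_clique E (component V E0 u)"
  unfolding is_clique_def
proof (intro ballI impI)
  fix u x y assume x: "x \<in> component V E0 u" and y: "y \<in> component V E0 u" and "x \<noteq> y"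
  have "0 < \<alpha>" and close: "\<And>a b. \<lbrakk>a \<in> V; b \<in> V; a \<noteq> b; dist (p a) (p b) \<le> \<alpha>\<rbrakk> \<Longrightarrow> {a, b} \<in> E"
    using assms(3) unfolding quasi_unit_ball_graph_def by blast+
  have short: "dist (p a) (p b) \<le> \<alpha> / real n" if "adj V E0 a b" for a b
    using that unfolding adj_def E0_def by blast
  define C where "C = component V E0 u"
  have C_reach: "C = {y. (adj V E0)\<^sup>*\<^sup>* x y}" unfolding C_def by (rule component_eq_reachable[OF x])
  have "C \<subseteq> V" by (auto simp: C_def component_def)
  with assms(1,2) have "finite C" "card C \<le> n" by (auto intro: finite_subset card_mono)
  have "dist (p x) (p y) \<le> real (card C - 1) * (\<alpha> / real n)"
    using reachable_dist_le_card[of "adj V E0" x p, OF _ short] \<open>finite C\<close> \<open>0 < \<alpha>\<close> y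
    by (simp add: C_reach flip: C_def)
  also have "\<dots> \<le> real n * (\<alpha> / real n)"
    using \<open>card C \<le> n\<close> \<open>0 < \<alpha>\<close> by (intro mult_right_mono) auto
  also have "\<dots> \<le> \<alpha>" using \<open>0 < \<alpha>\<close> by simp
  finally show "{x, y} \<in> E"
    using close x y \<open>x \<noteq> y\<close> by (auto simp: component_def)
qed

end
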